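(* For all $\phi\in\mathcal{L}_{\Box\!\!\rightarrow}$ and $\psi\in\mathcal{L}_\Box$: $\psi\in\mathsf{FSK}^d$ iff $Tr_\phi(\psi)\in\mathsf{N4CK}$.
   Context: $\mathcal{L}_\Box$ is built from propositional variables with $\wedge,\vee,\to$, strong negation $\sim$, and a unary modality $\Box$; $\mathcal{L}_{\Box\!\!\rightarrow}$ is built likewise but with a binary would-conditional $\Box\!\!\rightarrow$ instead of $\Box$. $\mathsf{FSK}^d$ (Odintsov–Wansing) is the modal logic over $\mathcal{L}_\Box$ given by Nelsonian modal models $(W,\leq,R,V^+,V^-)$: $\leq$ a preorder, $V^\pm$ assigning upward-closed sets, $R\subseteq W\times W$ with (i) $w\leq w'$ and $R(w,v)$ imply $R(w',v')$ for some $v'\geq v$, (ii) $R(w,v)$ and $v\leq v'$ imply $R(w',v')$ for some $w'\geq w$; verification/falsification as in Nelson's logic $\mathsf{N4}$ (atoms by $V^\pm$; $\wedge$ verified iff both verified, falsified iff one falsified; $\vee$ dually; $\sim$ swaps; $w\models^+\psi\to\chi$ iff for all $v\geq w$, $v\models^+\psi$ implies $v\models^+\chi$; $w\models^-\psi\to\chi$ iff $w\models^+\psi$ and $w\models^-\chi$), plus $w\models^+\Box\psi$ iff for all $v\geq w$ and $u$ with $R(v,u)$, $u\models^+\psi$, and $w\models^-\Box\psi$ iff some $u$ has $R(w,u)$ and $u\models^-\psi$; validity means verification everywhere. $\mathsf{N4CK}$ is the analogous conditional logic over $\mathcal{L}_{\Box\!\!\rightarrow}$: models $(W,\leq,R,V^+,V^-)$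 with $R\subseteq W\times(\mathcal{P}(W)\times\mathcal{P}(W))\times W$ satisfying (i),(ii) for each $R_{(X,Y)}$; $w\models^+\psi\Box\!\!\rightarrow\chi$ iff for all $v\geq w$ and $u$ with $R_{\|\psi\|}(v,u)$, $u\models^+\chi$; $w\models^-\psi\Box\!\!\rightarrow\chi$ iff some $u$ has $R_{\|\psi\|}(w,u)$ and $u\models^-\chi$, where $\|\psi\|=(\{w\mid w\models^+\psi\},\{w\mid w\models^-\psi\})$. For fixed $\phi\in\mathcal{L}_{\Box\!\!\rightarrow}$, $Tr_\phi:\mathcal{L}_\Box\to\mathcal{L}_{\Box\!\!\rightarrow}$ is defined by $Tr_\phi(p)=p$, $Tr_\phi(\sim\psi)=\sim Tr_\phi(\psi)$, $Tr_\phi(\psi\ast\chi)=Tr_\phi(\psi)\ast Tr_\phi(\chi)$ for $\ast\in\{\wedge,\vee,\to\}$, and $Tr_\phi(\Box\psi)=\phi\Box\!\!\rightarrow Tr_\phi(\psi)$. *)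

theory Defs
  imports Main
begin

datatype 'a fmB =
    AtB 'a
  | NegB "'a fmB"
  | AndB "'a fmB" "'a fmB"
  | OrB "'a fmB" "'a fmB"
  | ImpB "'a fmB" "'a fmB"
  | Box "'a fmB"

datatype 'a fmC =
    AtC 'a
  | NegC "'a fmC"
  | AndC "'a fmC" "'a fmC"
  | OrC "'a fmC" "'a fmC"
  | ImpC "'a fmC" "'a fmC"
  | Cond "'a fmC" "'a fmC"

definition upclosed :: "('w \<Rightarrow> 'w \<Rightarrow> bool) \<Rightarrow> 'w set \<Rightarrow> bool" where
  "upclosed le X \<longleftrightarrow> (\<forall>w v. w \<in> X \<and> le w v \<longrightarrow> v \<in> X)"

definition frame_conds :: "('w \<Rightarrow> 'w \<Rightarrow> bool) \<Rightarrow> ('w \<Rightarrow> 'w \<Rightarrow> bool) \<Rightarrow> bool" where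
  "frame_conds le R \<longleftrightarrow>
     (\<forall>w w' v. le w w' \<and> R w v \<longrightarrow> (\<exists>v'. le v v' \<and> R w' v')) \<and>
     (\<forall>w v v'. R w v \<and> le v v' \<longrightarrow> (\<exists>w'. le w w' \<and> R w' v'))"

definition fsk_model ::
  "('w \<Rightarrow> 'w \<Rightarrow> bool) \<Rightarrow> ('w \<Rightarrow> 'w \<Rightarrow> bool) \<Rightarrow> ('a \<Rightarrow> 'w set) \<Rightarrow> ('a \<Rightarrow> 'w set) \<Rightarrow> bool" where
  "fsk_model le R Vp Vn \<longleftrightarrow>
     reflp le \<and> transp le \<and> (\<forall>p. upclosed le (Vp p)) \<and> (\<forall>p. upclosed le (Vn p)) \<and>
     frame_conds le R"

definition n4ck_model ::
  "('w \<Rightarrow> 'w \<Rightarrow> bool) \<Rightarrow> ('w set \<times> 'w set \<Rightarrow> 'w \<Rightarrow> 'w \<Rightarrow> bool) \<Rightarrow> ('a \<Rightarrow> 'w set) \<Rightarrow> ('a \<Rightarrow> 'w set) \<Rightarrow> bool" where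
  "n4ck_model le R Vp Vn \<longleftrightarrow>
     reflp le \<and> transp le \<and> (\<forall>p. upclosed le (Vp p)) \<and> (\<forall>p. upclosed le (Vn p)) \<and>
     (\<forall>XY. frame_conds le (R XY))"

section \<open>Verification (pos = True) and falsification (pos = False)\<close>

primrec satB ::
  "('w \<Rightarrow> 'w \<Rightarrow> bool) \<Rightarrow> ('w \<Rightarrow> 'w \<Rightarrow> bool) \<Rightarrow> ('a \<Rightarrow> 'w set) \<Rightarrow> ('a \<Rightarrow> 'w set) \<Rightarrow>
   'a fmB \<Rightarrow> bool \<Rightarrow> 'w \<Rightarrow> bool" where
  "satB le R Vp Vn (AtB p) = (\<lambda>pos w. if pos then w \<in> Vp p else w \<in> Vn p)"
| "satB le R Vp Vn (NegB A) = (\<lambda>pos w. satB le R Vp Vn A (\<not> pos) w)"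
| "satB le R Vp Vn (AndB A B) = (\<lambda>pos w. if pos
      then satB le R Vp Vn A True w \<and> satB le R Vp Vn B True w
      else satB le R Vp Vn A False w \<or> satB le R Vp Vn B False w)"
| "satB le R Vp Vn (OrB A B) = (\<lambda>pos w. if pos
      then satB le R Vp Vn A True w \<or> satB le R Vp Vn B True w
      else satB le R Vp Vn A False w \<and> satB le R Vp Vn B False w)"
| "satB le R Vp Vn (ImpB A B) = (\<lambda>pos w. if pos
      then (\<forall>v. le w v \<longrightarrow> satB le R Vp Vn A True v \<longrightarrow> satB le R Vp Vn B True v)
      else satB le R Vp Vn A True w \<and> satB le R Vp Vn B False w)"
| "satB le R Vp Vn (Box A) = (\<lambda>pos w. if pos
      then (\<forall>v u. le w v \<longrightarrow> R v u \<longrightarrow> satB le R Vp Vn A True u)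
      else (\<exists>u. R w u \<and> satB le R Vp Vn A False u))"

primrec satC ::
  "('w \<Rightarrow> 'w \<Rightarrow> bool) \<Rightarrow> ('w set \<times> 'w set \<Rightarrow> 'w \<Rightarrow> 'w \<Rightarrow> bool) \<Rightarrow> ('a \<Rightarrow> 'w set) \<Rightarrow> ('a \<Rightarrow> 'w set) \<Rightarrow>
   'a fmC \<Rightarrow> bool \<Rightarrow> 'w \<Rightarrow> bool" where
  "satC le R Vp Vn (AtC p) = (\<lambda>pos w. if pos then w \<in> Vp p else w \<in> Vn p)"
| "satC le R Vp Vn (NegC A) = (\<lambda>pos w. satC le R Vp Vn A (\<not> pos) w)"
| "satC le R Vp Vn (AndC A B) = (\<lambda>pos w. if pos
      then satC le R Vp Vn A True w \<and> satC le R Vp Vn B True w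
      else satC le R Vp Vn A False w \<or> satC le R Vp Vn B False w)"
| "satC le R Vp Vn (OrC A B) = (\<lambda>pos w. if pos
      then satC le R Vp Vn A True w \<or> satC le R Vp Vn B True w
      else satC le R Vp Vn A False w \<and> satC le R Vp Vn B False w)"
| "satC le R Vp Vn (ImpC A B) = (\<lambda>pos w. if pos
      then (\<forall>v. le w v \<longrightarrow> satC le R Vp Vn A True v \<longrightarrow> satC le R Vp Vn B True v)
      else satC le R Vp Vn A True w \<and> satC le R Vp Vn B False w)"
| "satC le R Vp Vn (Cond A B) = (\<lambda>pos w. if pos
      then (\<forall>v u. le w v \<longrightarrow>
              R ({x. satC le R Vp Vn A True x}, {x. satC le R Vp Vn A False x}) v u \<longrightarrow>
              satC le R Vp Vn B True u)
      else (\<exists>u. R ({x. satC le R Vp Vn A True x}, {x. satC le R Vp Vn A False x}) w u \<and>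
              satC le R Vp Vn B False u))"

text \<open>The world type is an explicit parameter; membership in the logic is validity over
  all models whose worlds live in the type 'w.\<close>
definition FSKd :: "'w itself \<Rightarrow> 'a fmB set" where
  "FSKd (_ :: 'w itself) = {A. \<forall>(le :: 'w \<Rightarrow> 'w \<Rightarrow> bool) R Vp Vn.
      fsk_model le R Vp Vn \<longrightarrow> (\<forall>w. satB le R Vp Vn A True w)}"

definition N4CK :: "'w itself \<Rightarrow> 'a fmC set" where
  "N4CK (_ :: 'w itself) = {A. \<forall>(le :: 'w \<Rightarrow> 'w \<Rightarrow> bool) R Vp Vn.
      n4ck_model le R Vp Vn \<longrightarrow> (\<forall>w. satC le R Vp Vn A True w)}"

primrec Tr :: "'a fmC \<Rightarrow> 'a fmB \<Rightarrow> 'a fmC" where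
  "Tr \<phi> (AtB p) = AtC p"
| "Tr \<phi> (NegB A) = NegC (Tr \<phi> A)"
| "Tr \<phi> (AndB A B) = AndC (Tr \<phi> A) (Tr \<phi> B)"
| "Tr \<phi> (OrB A B) = OrC (Tr \<phi> A) (Tr \<phi> B)"
| "Tr \<phi> (ImpB A B) = ImpC (Tr \<phi> A) (Tr \<phi> B)"
| "Tr \<phi> (Box A) = Cond \<phi> (Tr \<phi> A)"

end

theory Submission
  imports Defs
begin

text \<open>In a conditional model, Tr \<phi> \<psi> is evaluated exactly as \<psi> in the modal model whose
  accessibility relation is the conditional relation indexed by the truth set of \<phi>. Every
  such slice of a conditional model is a modal model, and conversely a modal model is a
  conditional model whose relation ignores its index; so validity transfers both ways.\<close>

lemma satC_Tr:
  "satC le R Vp Vn (Tr \<phi> A) pos w =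
   satB le (R ({x. satC le R Vp Vn \<phi> True x}, {x. satC le R Vp Vn \<phi> False x})) Vp Vn A pos w"
  by (induction A arbitrary: pos w) auto

lemma fsk_model_slice:
  "n4ck_model le R Vp Vn \<Longrightarrow> fsk_model le (R XY) Vp Vn"
  unfolding n4ck_model_def fsk_model_def by blast

lemma n4ck_model_const:
  "fsk_model le R Vp Vn \<Longrightarrow> n4ck_model le (\<lambda>_. R) Vp Vn"
  unfolding n4ck_model_def fsk_model_def by blast

theorem lemma16:
  fixes \<phi> :: "'a fmC" and \<psi> :: "'a fmB"
  shows "\<psi> \<in> FSKd TYPE('w) \<longleftrightarrow> Tr \<phi> \<psi> \<in> N4CK TYPE('w)"
proof
  assume valid: "\<psi> \<in> FSKd TYPE('w)"
  show "Tr \<phi> \<psi> \<in> N4CK TYPE('w)"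
    unfolding N4CK_def
  proof (intro CollectI allI impI)
    fix le :: "'w \<Rightarrow> 'w \<Rightarrow> bool" and R and Vp Vn :: "'a \<Rightarrow> 'w set" and w
    assume "n4ck_model le R Vp Vn"
    then have "fsk_model le
        (R ({x. satC le R Vp Vn \<phi> True x}, {x. satC le R Vp Vn \<phi> False x})) Vp Vn"
      by (rule fsk_model_slice)
    with valid show "satC le R Vp Vn (Tr \<phi> \<psi>) True w"
      unfolding FSKd_def satC_Tr by blast
  qed
next
  assume valid: "Tr \<phi> \<psi> \<in> N4CK TYPE('w)"
  show "\<psi> \<in> FSKd TYPE('w)"
    unfolding FSKd_def
  proof (intro CollectI allI impI)
    fix le :: "'w \<Rightarrow> 'w \<Rightarrow> bool" and R and Vp Vn :: "'a \<Rightarrow> 'w set" and w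
    assume "fsk_model le R Vp Vn"
    then have "n4ck_model le (\<lambda>_. R) Vp Vn"
      by (rule n4ck_model_const)
    with valid have "satC le (\<lambda>_. R) Vp Vn (Tr \<phi> \<psi>) True w"
      unfolding N4CK_def by blast
    then show "satB le R Vp Vn \<psi> True w"
      by (simp add: satC_Tr)
  qed
qed

end
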